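(* Let $N\ge3$. One has $\pi_Y\circ\mathcal F=\mathcal F_Y\circ\pi_{\widetilde Y}$ as maps $\mathbb{Q}(\mu_N)\langle\langle\widetilde X\rangle\rangle\to\mathbb{Q}(\mu_N)\langle\langle Y\rangle\rangle$, and $\mathbf p\circ\mathcal F=\mathcal F\circ\widetilde{\mathbf q}$ as maps $\mathbb{Q}(\mu_N)\langle\langle\widetilde X\rangle\rangle\to\mathbb{Q}(\mu_N)\langle\langle X\rangle\rangle$.
   Context: $\zeta_N=\exp(2\pi i/N)$, $\mu_N$ the complex $N$-th roots of unity, $\iota:\{1,\dots,N\}\to\mathbb{Z}/N\mathbb{Z}$ the residue-class bijection. $K\langle\langle\mathcal L\rangle\rangle$: noncommutative formal power series over $\mathcal L$. Alphabets $X=\{x_0\}\cup\{x_\zeta:\zeta\in\mu_N\}$, $Y=\{y_{k,\zeta}:k\ge1,\zeta\in\mu_N\}$, $\widetilde X=\{\tilde x\}\cup\{\tilde x_\alpha:\alpha\in\mathbb{Z}/N\mathbb{Z}\}$, $\widetilde Y=\{\tilde y_{k,\alpha}:k\ge1,\alpha\in\mathbb{Z}/N\mathbb{Z}\}$, with $y_{k,\zeta}\equiv x_0^{k-1}x_\zeta$ and $\tilde y_{k,\alpha}\equiv\tilde x^{k-1}\tilde x_\alpha$. Using the decompositions $K\langle\langle X\rangle\rangle=K\langle\langle Y\rangle\rangle\oplus K\langle\langle X\rangle\rangle x_0$ and $K\langle\langle\widetilde X\rangle\rangle=K\langle\langle\widetilde Y\rangle\rangle\oplus K\langle\langle\widetilde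 X\rangle\rangle\tilde x$, $\pi_Y$ and $\pi_{\widetilde Y}$ are the projections onto the first summands. $\mathbf p$ is the linear automorphism of $K\langle\langle X\rangle\rangle$ with $\mathbf p(x_0^{k_1-1}x_{\zeta_1}x_0^{k_2-1}x_{\zeta_2}\cdots x_0^{k_r-1}x_{\zeta_r}x_0^{k_{r+1}-1})=x_0^{k_1-1}x_{\zeta_1}x_0^{k_2-1}x_{\zeta_1\zeta_2}\cdots x_0^{k_r-1}x_{\zeta_1\cdots\zeta_r}x_0^{k_{r+1}-1}$, and $\widetilde{\mathbf q}$ is the linear automorphism of $K\langle\langle\widetilde X\rangle\rangle$ with $\widetilde{\mathbf q}(\tilde x^{k_1-1}\tilde x_{\alpha_1}\cdots\tilde x^{k_r-1}\tilde x_{\alpha_r}\tilde x^{k_{r+1}-1})=\tilde x^{k_1-1}\tilde x_{\alpha_1-\alpha_2}\cdots\tilde x^{k_{r-1}-1}\tilde x_{\alpha_{r-1}-\alpha_r}\tilde x^{k_r-1}\tilde x_{\alpha_r}\tilde x^{k_{r+1}-1}$ ($r\ge0$, $k_i\ge1$). $\mathcal F:\mathbb{Q}(\mu_N)\langle\langle\widetilde X\rangle\rangle\to\mathbb{Q}(\mu_N)\langle\langle X\rangle\rangle$ is the continuous algebra isomorphism with $\tilde x\mapsto x_0$, $\tilde x_\alpha\mapsto\sum_{m=1}^N\zeta_N^{-m\iota^{-1}(\alpha)}x_{\zeta_N^m}$, and $\mathcal F_Y$ is its restriction $\mathbb{Q}(\mu_N)\langle\langle\widetilde Y\rangle\rangle\to\mathbb{Q}(\mu_N)\langle\langle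 Y\rangle\rangle$, $\tilde y_{k,\alpha}\mapsto\sum_{m=1}^N\zeta_N^{-m\iota^{-1}(\alpha)}y_{k,\zeta_N^m}$. *)

theory Defs
  imports Complex_Main
begin

text \<open>A letter is either the distinguished letter (x_0 resp. tilde x) or an indexed letter.
  For X the index is a root of unity zeta in mu_N (a complex number);
  for tilde X the index is a residue class alpha in Z/NZ, represented by its
  canonical representative in {0..<N}.\<close>
datatype 'a letter = Z0 | Lt 'a

text \<open>Noncommutative formal power series: coefficient functions on words.
  A series over an alphabet A is a function vanishing off the words over A.\<close>
type_synonym 'a series = "'a letter list \<Rightarrow> complex"

definition zeta :: "nat \<Rightarrow> complex" where
  "zeta N = cis (2 * pi / real N)"

definition muN :: "nat \<Rightarrow> complex set" where
  "muN N = {z. z ^ N = 1}"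

definition is_subfield :: "complex set \<Rightarrow> bool" where
  "is_subfield K \<longleftrightarrow> 0 \<in> K \<and> 1 \<in> K \<and> (\<forall>a\<in>K. \<forall>b\<in>K. a + b \<in> K \<and> a - b \<in> K \<and> a * b \<in> K)
     \<and> (\<forall>a\<in>K. inverse a \<in> K)"

definition QmuN :: "nat \<Rightarrow> complex set" where
  "QmuN N = {z. \<forall>K. is_subfield K \<and> muN N \<subseteq> K \<longrightarrow> z \<in> K}"

definition xAlph :: "nat \<Rightarrow> complex letter set" where
  "xAlph N = insert Z0 (Lt ` muN N)"

definition tAlph :: "nat \<Rightarrow> nat letter set" where
  "tAlph N = insert Z0 (Lt ` {..<N})"

definition iota_inv :: "nat \<Rightarrow> nat \<Rightarrow> nat" where
  "iota_inv N \<alpha> = (if \<alpha> mod N = 0 then N else \<alpha> mod N)"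

definition ser_one :: "'a series" where
  "ser_one w = (if w = [] then 1 else 0)"

definition ser_mult :: "'a series \<Rightarrow> 'a series \<Rightarrow> 'a series" where
  "ser_mult S T w = (\<Sum>i\<le>length w. S (take i w) * T (drop i w))"

definition F_letter :: "nat \<Rightarrow> nat letter \<Rightarrow> complex series" where
  "F_letter N a = (case a of
      Z0 \<Rightarrow> (\<lambda>w. if w = [Z0] then 1 else 0)
    | Lt \<alpha> \<Rightarrow> (\<lambda>w. \<Sum>m=1..N. inverse (zeta N ^ (m * iota_inv N \<alpha>))
                          * (if w = [Lt (zeta N ^ m)] then 1 else 0)))"

definition F_word :: "nat \<Rightarrow> nat letter list \<Rightarrow> complex series" where
  "F_word N u = foldr (\<lambda>a acc. ser_mult (F_letter N a) acc) u ser_one"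

text \<open>Continuous extension: F(S) = sum_u S(u) F(u); the coefficient of a word w only
  receives contributions from words u of the same length (letter images are homogeneous of
  degree 1), hence is a finite sum.\<close>
definition F :: "nat \<Rightarrow> nat series \<Rightarrow> complex series" where
  "F N S w = (\<Sum>u\<in>{u. length u = length w \<and> set u \<subseteq> tAlph N}. S u * F_word N u w)"

text \<open>F_Y is the restriction of F to Q(mu_N)<<tilde Y>>, with tilde Y-series viewed inside
  Q(mu_N)<<tilde X>> via tilde y_{k,alpha} = tilde x^{k-1} tilde x_alpha (and likewise for Y).\<close>
definition F_Y :: "nat \<Rightarrow> nat series \<Rightarrow> complex series" where
  "F_Y N S = F N S"

text \<open>Words in Y (resp. tilde Y) are exactly the words that are empty or do not end with
  the distinguished letter; pi_Y kills the summand K<<X>> x_0.\<close>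
definition piY :: "'a series \<Rightarrow> 'a series" where
  "piY S w = (if w = [] \<or> last w \<noteq> Z0 then S w else 0)"

definition linext :: "'a letter set \<Rightarrow> ('a letter list \<Rightarrow> 'a letter list) \<Rightarrow> 'a series \<Rightarrow> 'a series" where
  "linext A f S w' = (\<Sum>w\<in>{w. length w = length w' \<and> set w \<subseteq> A \<and> f w = w'}. S w)"

fun p_aux :: "complex \<Rightarrow> complex letter list \<Rightarrow> complex letter list" where
  "p_aux c [] = []"
| "p_aux c (Z0 # w) = Z0 # p_aux c w"
| "p_aux c (Lt z # w) = Lt (c * z) # p_aux (c * z) w"

definition p_word :: "complex letter list \<Rightarrow> complex letter list" where
  "p_word w = p_aux 1 w"

definition p :: "nat \<Rightarrow> complex series \<Rightarrow> complex series" where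
  "p N = linext (xAlph N) p_word"

fun next_alpha :: "nat letter list \<Rightarrow> nat" where
  "next_alpha [] = 0"
| "next_alpha (Z0 # w) = next_alpha w"
| "next_alpha (Lt b # w) = b"

fun q_word :: "nat \<Rightarrow> nat letter list \<Rightarrow> nat letter list" where
  "q_word N [] = []"
| "q_word N (Z0 # w) = Z0 # q_word N w"
| "q_word N (Lt a # w) = Lt ((a + N - next_alpha w) mod N) # q_word N w"

definition q :: "nat \<Rightarrow> nat series \<Rightarrow> nat series" where
  "q N = linext (tAlph N) (q_word N)"

end

theory Submission
  imports Defs
begin

text \<open>
  The image under F of a word u is a product of
  one-letter series, and a distinguished letter is sent to a distinguished letter and an
  indexed letter to a combination of indexed letters; so the coefficient of w in F(u)
  vanishes unless u and w carry the distinguished letter at the same positions. In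
  particular u ends with tilde x iff w ends with x_0, whence pi_Y F = F pi_Y.

  For p, the substitution (zeta_1, ..., zeta_r) to (eta_1, ..., eta_r) with
  eta_i = zeta_1 ... zeta_i is a bijection of the words over X, inverted by
  zeta_i = eta_i / eta_(i-1). Since the coefficient of x_zeta in F(tilde x_alpha) is
  zeta^(-alpha), the coefficient of a word in p(F(u)) is a product of factors
  (eta_i / eta_(i-1))^(-alpha_i), which telescopes to the product of
  eta_i^(-(alpha_i - alpha_(i+1))) with alpha_(r+1) = 0: the coefficient of the same word
  in F(tilde q(u)).
\<close>

lemma zeta_power: "zeta N ^ k = cis (2 * pi * real k / real N)"
  by (simp add: zeta_def DeMoivre mult.commute)

lemma power_mod_root_unity:
  fixes z :: "'a :: monoid_mult"
  assumes "z ^ N = 1"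
  shows "z ^ (k mod N) = z ^ k"
proof -
  have "z ^ k = z ^ (N * (k div N) + k mod N)"
    by simp
  also have "\<dots> = (z ^ N) ^ (k div N) * z ^ (k mod N)"
    by (simp only: power_add power_mult)
  finally have "z ^ k = (z ^ N) ^ (k div N) * z ^ (k mod N)" .
  then show ?thesis using assms by simp
qed

lemma bij_betw_zeta_power:
  assumes "N > 0"
  shows "bij_betw (\<lambda>m. zeta N ^ m) {1..N} {z. z ^ N = 1}"
proof -
  have "bij_betw (\<lambda>m. m mod N) {1..N} {..<N}"
  proof (rule bij_betw_byWitness[where f' = "\<lambda>k. if k = 0 then N else k"])
    have "m mod N = (if m = N then 0 else m)" if "m \<in> {1..N}" for m
      using that by auto
    then show "\<forall>m\<in>{1..N}. (if m mod N = 0 then N else m mod N) = m"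
      and "(\<lambda>m. m mod N) ` {1..N} \<subseteq> {..<N}"
      using assms by auto
  qed (use assms in auto)
  moreover have "bij_betw (\<lambda>k. zeta N ^ k) {..<N} {z. z ^ N = 1}"
    unfolding zeta_power by (rule bij_betw_roots_unity[OF assms])
  ultimately have "bij_betw ((\<lambda>k. zeta N ^ k) \<circ> (\<lambda>m. m mod N)) {1..N} {z. z ^ N = 1}"
    by (rule bij_betw_trans)
  moreover have "zeta N ^ N = 1"
    using assms by (simp add: zeta_def DeMoivre)
  ultimately show ?thesis
    by (simp add: comp_def power_mod_root_unity)
qed

lemma F_letter_Lt_Lt:
  assumes "N > 0"
  shows "F_letter N (Lt \<alpha>) [Lt z] = (if z ^ N = 1 then inverse (z ^ \<alpha>) else 0)"
proof -
  let ?g = "\<lambda>y. if z = y then inverse (y ^ iota_inv N \<alpha>) else 0"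
  have "F_letter N (Lt \<alpha>) [Lt z] = (\<Sum>m=1..N. ?g (zeta N ^ m))"
    unfolding F_letter_def by (auto simp flip: power_mult intro!: sum.cong)
  also have "\<dots> = (\<Sum>y\<in>{y. y ^ N = 1}. ?g y)"
    by (rule sum.reindex_bij_betw[OF bij_betw_zeta_power[OF assms]])
  also have "\<dots> = (if z ^ N = 1 then inverse (z ^ iota_inv N \<alpha>) else 0)"
    using finite_roots_unity[where 'a = complex] assms by simp
  also have "z ^ N = 1 \<Longrightarrow> z ^ iota_inv N \<alpha> = z ^ \<alpha>"
    by (metis iota_inv_def power_mod_root_unity mod_self)
  ultimately show ?thesis by simp
qed

lemma F_letter_eq_0_if_length_ne_1: "length v \<noteq> 1 \<Longrightarrow> F_letter N a v = 0"
  by (cases a) (auto simp: F_letter_def intro!: sum.neutral)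

lemma F_letter_Z0 [simp]: "F_letter N Z0 [b] = (if b = Z0 then 1 else 0)"
  by (simp add: F_letter_def)

lemma F_letter_Lt_Z0 [simp]: "F_letter N (Lt \<alpha>) [Z0] = 0"
  by (simp add: F_letter_def)

lemma ser_mult_Nil:
  assumes "\<And>v. length v \<noteq> 1 \<Longrightarrow> L v = 0"
  shows "ser_mult L T [] = 0"
  using assms by (simp add: ser_mult_def)

lemma ser_mult_Cons:
  assumes "\<And>v. length v \<noteq> 1 \<Longrightarrow> L v = 0"
  shows "ser_mult L T (b # w) = L [b] * T w"
proof -
  have "ser_mult L T (b # w) = (\<Sum>i\<le>length (b # w). if i = 1 then L [b] * T w else 0)"
    unfolding ser_mult_def using assms by (intro sum.cong) auto
  also have "\<dots> = L [b] * T w"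
    by (subst sum.delta) simp_all
  finally show ?thesis .
qed

lemma F_word_Nil [simp]: "F_word N [] w = (if w = [] then 1 else 0)"
  by (simp add: F_word_def ser_one_def)

lemma F_word_Cons_Nil [simp]: "F_word N (a # u) [] = 0"
  by (simp add: F_word_def ser_mult_Nil F_letter_eq_0_if_length_ne_1)

lemma F_word_Cons_Cons [simp]: "F_word N (a # u) (b # w) = F_letter N a [b] * F_word N u w"
  by (simp add: F_word_def ser_mult_Cons F_letter_eq_0_if_length_ne_1)

lemma F_word_nonzero_imp_same_Z0_positions:
  "F_word N u w \<noteq> 0 \<Longrightarrow> map (\<lambda>x. x = Z0) u = map (\<lambda>x. x = Z0) w"
proof (induction u arbitrary: w)
  case (Cons a u)
  then obtain b w' where w: "w = b # w'" and "F_letter N a [b] \<noteq> 0" "F_word N u w' \<noteq> 0"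
    by (cases w) simp_all
  then have "(a = Z0) = (b = Z0)"
    by (cases a; cases b) simp_all
  with Cons.IH \<open>F_word N u w' \<noteq> 0\<close> show ?case by (simp add: w)
qed (simp split: if_splits)

lemma F_word_nonzero_imp_xAlph:
  assumes "N > 0"
  shows "F_word N u w \<noteq> 0 \<Longrightarrow> set w \<subseteq> xAlph N"
proof (induction u arbitrary: w)
  case (Cons a u)
  then obtain b w' where w: "w = b # w'" and "F_letter N a [b] \<noteq> 0" "F_word N u w' \<noteq> 0"
    by (cases w) simp_all
  have "b \<in> xAlph N"
  proof (cases b)
    case (Lt z)
    with \<open>F_letter N a [b] \<noteq> 0\<close> obtain \<alpha> where "F_letter N (Lt \<alpha>) [Lt z] \<noteq> 0"
      by (cases a) simp_all
    then have "z ^ N = 1"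
      by (simp add: F_letter_Lt_Lt[OF assms] split: if_splits)
    with Lt show ?thesis by (simp add: xAlph_def muN_def)
  qed (simp add: xAlph_def)
  with Cons.IH \<open>F_word N u w' \<noteq> 0\<close> show ?case by (simp add: w)
qed (simp split: if_splits)

lemma piY_F: "piY (F N S) = F N (piY S)"
proof
  fix w
  have factor: "piY S u * F_word N u w = (if w = [] \<or> last w \<noteq> Z0 then S u * F_word N u w else 0)" for u
  proof (cases "F_word N u w = 0")
    case False
    let ?isZ0 = "\<lambda>x. x = Z0"
    from F_word_nonzero_imp_same_Z0_positions[OF False]
    have same: "map ?isZ0 u = map ?isZ0 w" .
    then have "u = [] \<longleftrightarrow> w = []"
      by (metis map_eq_imp_length_eq length_0_conv)
    moreover have "?isZ0 (last u) = ?isZ0 (last w)" if "u \<noteq> []"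
      using arg_cong[OF same, of last] that \<open>u = [] \<longleftrightarrow> w = []\<close> by (simp add: last_map)
    ultimately have "(u = [] \<or> last u \<noteq> Z0) = (w = [] \<or> last w \<noteq> Z0)"
      by blast
    then show ?thesis by (simp add: piY_def)
  qed simp
  show "piY (F N S) w = F N (piY S) w"
    unfolding F_def piY_def[of "F N S"] factor by simp
qed

text \<open>The parameter c is the previous partial product eta_(i-1).\<close>

fun p_aux_inv :: "complex \<Rightarrow> complex letter list \<Rightarrow> complex letter list" where
  "p_aux_inv c [] = []"
| "p_aux_inv c (Z0 # w) = Z0 # p_aux_inv c w"
| "p_aux_inv c (Lt y # w) = Lt (y / c) # p_aux_inv y w"

lemma length_p_aux_inv [simp]: "length (p_aux_inv c w) = length w"
  by (induction c w rule: p_aux_inv.induct) auto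

lemma p_aux_inv_eq_Nil_iff [simp]: "p_aux_inv c w = [] \<longleftrightarrow> w = []"
  by (metis length_0_conv length_p_aux_inv)

lemma p_aux_p_aux_inv: "c \<noteq> 0 \<Longrightarrow> Lt 0 \<notin> set w \<Longrightarrow> p_aux c (p_aux_inv c w) = w"
  by (induction c w rule: p_aux_inv.induct) auto

lemma p_aux_inv_p_aux: "c \<noteq> 0 \<Longrightarrow> Lt 0 \<notin> set w \<Longrightarrow> p_aux_inv c (p_aux c w) = w"
  by (induction c w rule: p_aux.induct) auto

lemma set_p_aux_subset_xAlph: "c ^ N = 1 \<Longrightarrow> set w \<subseteq> xAlph N \<Longrightarrow> set (p_aux c w) \<subseteq> xAlph N"
  by (induction c w rule: p_aux.induct) (auto simp: xAlph_def muN_def power_mult_distrib)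

lemma set_p_aux_inv_subset_xAlph: "c ^ N = 1 \<Longrightarrow> set w \<subseteq> xAlph N \<Longrightarrow> set (p_aux_inv c w) \<subseteq> xAlph N"
  by (induction c w rule: p_aux_inv.induct) (auto simp: xAlph_def muN_def power_divide)

lemma Lt_0_notin_xAlph: "N > 0 \<Longrightarrow> Lt 0 \<notin> xAlph N"
  by (auto simp: xAlph_def muN_def power_0_left)

lemma p_word_fibre:
  assumes "N > 0"
  shows "{v. length v = length w \<and> set v \<subseteq> xAlph N \<and> p_word v = w}
    = (if set w \<subseteq> xAlph N then {p_aux_inv 1 w} else {})"
proof -
  have unique: "v = p_aux_inv 1 w" if "set v \<subseteq> xAlph N" "p_word v = w" for v
  proof -
    have "Lt 0 \<notin> set v" using that(1) Lt_0_notin_xAlph[OF assms] by blast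
    with that(2) show ?thesis using p_aux_inv_p_aux[of 1 v] by (simp add: p_word_def)
  qed
  have closed: "set (p_word v) \<subseteq> xAlph N" if "set v \<subseteq> xAlph N" for v
    using that set_p_aux_subset_xAlph[of 1 N v] by (simp add: p_word_def)
  show ?thesis
  proof (cases "set w \<subseteq> xAlph N")
    case True
    then have "Lt 0 \<notin> set w" using Lt_0_notin_xAlph[OF assms] by blast
    then have "p_aux_inv 1 w \<in> {v. length v = length w \<and> set v \<subseteq> xAlph N \<and> p_word v = w}"
      using True set_p_aux_inv_subset_xAlph[of 1 N w] p_aux_p_aux_inv[of 1 w] by (simp add: p_word_def)
    then have "{v. length v = length w \<and> set v \<subseteq> xAlph N \<and> p_word v = w} = {p_aux_inv 1 w}"
      using unique by blast
    with True show ?thesis by simp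
  next
    case False
    with closed show ?thesis by auto
  qed
qed

lemma p_apply:
  assumes "N > 0"
  shows "p N T w = (if set w \<subseteq> xAlph N then T (p_aux_inv 1 w) else 0)"
  by (simp add: p_def linext_def p_word_fibre[OF assms])

lemma next_alpha_less: "N > 0 \<Longrightarrow> set u \<subseteq> tAlph N \<Longrightarrow> next_alpha u < N"
  by (induction u rule: next_alpha.induct) (auto simp: tAlph_def)

lemma F_letter_Lt_divide:
  fixes c z :: complex
  assumes "N > 0" "c ^ N = 1" "z ^ N = 1" "\<beta> < N"
  shows "F_letter N (Lt \<alpha>) [Lt (z / c)] * z ^ \<beta>
    = c ^ \<alpha> * F_letter N (Lt ((\<alpha> + N - \<beta>) mod N)) [Lt z]"
proof -
  have "z \<noteq> 0" and "c \<noteq> 0"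
    using assms(1-3) by (auto simp: power_0_left)
  have "z ^ ((\<alpha> + N - \<beta>) mod N) * z ^ \<beta> = z ^ (\<alpha> + N - \<beta> + \<beta>)"
    by (simp add: power_mod_root_unity[OF assms(3)] power_add)
  also have "\<dots> = z ^ \<alpha>"
    using assms(3,4) by (simp add: power_add)
  finally have "inverse (z ^ ((\<alpha> + N - \<beta>) mod N)) = z ^ \<beta> / z ^ \<alpha>"
    using \<open>z \<noteq> 0\<close> by (simp add: field_simps)
  moreover have "(z / c) ^ N = 1"
    using assms(2,3) by (simp add: power_divide)
  ultimately show ?thesis
    using assms(1,3) \<open>z \<noteq> 0\<close> \<open>c \<noteq> 0\<close> by (simp add: F_letter_Lt_Lt power_divide field_simps)
qed

lemma F_word_p_aux_inv:
  assumes "N > 0"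
  shows "c ^ N = 1 \<Longrightarrow> set u \<subseteq> tAlph N
    \<Longrightarrow> F_word N u (p_aux_inv c w) = c ^ next_alpha u * F_word N (q_word N u) w"
proof (induction u arbitrary: c w)
  case Nil
  then show ?case by simp
next
  case (Cons a u c w)
  note IH = Cons.IH and c_root = Cons.prems(1)
  have u: "set u \<subseteq> tAlph N"
    using Cons.prems(2) by simp
  show ?case
  proof (cases w)
    case Nil
    then show ?thesis by (cases a) simp_all
  next
    case (Cons x w')
    show ?thesis
    proof (cases "a = Z0 \<or> x = Z0")
      case True
      then show ?thesis
        using Cons IH[OF c_root u] by (cases a; cases x) simp_all
    next
      case False
      then obtain \<alpha> z where a: "a = Lt \<alpha>" and x: "x = Lt z"
        by (cases a; cases x) simp_all
      show ?thesis
      proof (cases "z ^ N = 1")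
        case True
        let ?\<beta> = "next_alpha u"
        have "?\<beta> < N"
          using next_alpha_less[OF assms u] .
        have "F_word N (a # u) (p_aux_inv c w)
            = F_letter N (Lt \<alpha>) [Lt (z / c)] * F_word N u (p_aux_inv z w')"
          by (simp add: a x Cons)
        also have "\<dots> = F_letter N (Lt \<alpha>) [Lt (z / c)] * z ^ ?\<beta> * F_word N (q_word N u) w'"
          using IH[OF True u] by simp
        also have "\<dots> = c ^ \<alpha> * F_letter N (Lt ((\<alpha> + N - ?\<beta>) mod N)) [Lt z] * F_word N (q_word N u) w'"
          using F_letter_Lt_divide[OF assms c_root True \<open>?\<beta> < N\<close>] by simp
        also have "\<dots> = c ^ next_alpha (a # u) * F_word N (q_word N (a # u)) w"
          by (simp add: a x Cons)
        finally show ?thesis .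
      next
        case False
        then have "(z / c) ^ N \<noteq> 1"
          using c_root by (simp add: power_divide)
        with False show ?thesis
          by (simp add: a x Cons F_letter_Lt_Lt[OF assms])
      qed
    qed
  qed
qed

lemma length_q_word [simp]: "length (q_word N u) = length u"
  by (induction N u rule: q_word.induct) auto

lemma set_q_word_subset_tAlph: "N > 0 \<Longrightarrow> set (q_word N u) \<subseteq> tAlph N"
  by (induction N u rule: q_word.induct) (auto simp: tAlph_def)

lemma finite_tAlph_words: "finite {u. length u = n \<and> set u \<subseteq> tAlph N}"
  using finite_lists_length_eq[of "tAlph N" n] by (simp add: tAlph_def conj_commute)

lemma F_linext_tAlph:
  assumes "\<And>u. length (f u) = length u"
    and "\<And>u. set u \<subseteq> tAlph N \<Longrightarrow> set (f u) \<subseteq> tAlph N"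
  shows "F N (linext (tAlph N) f S) w
    = (\<Sum>u\<in>{u. length u = length w \<and> set u \<subseteq> tAlph N}. S u * F_word N (f u) w)"
proof -
  let ?T = "{u. length u = length w \<and> set u \<subseteq> tAlph N}"
  have "F N (linext (tAlph N) f S) w = (\<Sum>v\<in>?T. \<Sum>u\<in>{u \<in> ?T. f u = v}. S u * F_word N (f u) w)"
    unfolding F_def linext_def sum_distrib_right by (intro sum.cong) auto
  also have "\<dots> = (\<Sum>u\<in>?T. S u * F_word N (f u) w)"
    using assms by (intro sum.group finite_tAlph_words) auto
  finally show ?thesis .
qed

lemma p_F:
  assumes "N > 0"
  shows "p N (F N S) = F N (q N S)"
proof
  fix w :: "complex letter list"
  let ?T = "{u. length u = length w \<and> set u \<subseteq> tAlph N}"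
  show "p N (F N S) w = F N (q N S) w"
  proof (cases "set w \<subseteq> xAlph N")
    case True
    then have "p N (F N S) w = (\<Sum>u\<in>?T. S u * F_word N u (p_aux_inv 1 w))"
      by (simp add: p_apply[OF assms] F_def)
    also have "\<dots> = (\<Sum>u\<in>?T. S u * F_word N (q_word N u) w)"
      using F_word_p_aux_inv[OF assms, of 1] by simp
    also have "\<dots> = F N (q N S) w"
      unfolding q_def by (rule F_linext_tAlph[symmetric]) (simp_all add: set_q_word_subset_tAlph[OF assms])
    finally show ?thesis .
  next
    case False
    then have "F_word N v w = 0" for v
      using F_word_nonzero_imp_xAlph[OF assms] by blast
    with False show ?thesis
      by (simp add: p_apply[OF assms] F_def)
  qed
qed

theorem lemma3p3:
  fixes N :: nat and S :: "nat series"
  assumes "N \<ge> 3"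
    and "\<forall>u. S u \<noteq> 0 \<longrightarrow> set u \<subseteq> tAlph N"
    and "\<forall>u. S u \<in> QmuN N"
  shows "piY (F N S) = F_Y N (piY S) \<and> p N (F N S) = F N (q N S)"
  using piY_F p_F assms(1) by (simp add: F_Y_def)

end
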